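(* Let $\overrightarrow{W}$ be a Morse sequence on a simplicial complex $K$. Then for every $p$, $\widehat{\partial}_p\circ\curlywedge_p=\curlywedge_{p-1}\circ\partial_p$ as maps $K[p]\to\widehat W[p-1]$, and $\widehat{\delta}_p\circ\curlyvee_p=\curlyvee_{p+1}\circ\delta_p$ as maps $K[p]\to\widehat W[p+1]$.
   Context: A simplicial complex $K$ is a finite collection of non-empty finite sets closed under taking non-empty subsets; $\dim\sigma=|\sigma|-1$, $K^{(p)}$ the set of $p$-simplices. A pair $(\sigma,\tau)$ with $\sigma\subsetneq\tau$ is a free pair for $K$ if $\tau$ is the only simplex other than $\sigma$ containing $\sigma$; $K$ is then an elementary expansion of $K\setminus\{\sigma,\tau\}$. If $\nu$ is a facet (maximal simplex) of $K$, $K$ is an elementary filling of $K\setminus\{\nu\}$. A Morse sequence on $K$ is a sequence $\langle\emptyset=K_0,\dots,K_k=K\rangle$ with each $K_i$ an elementary expansion or filling of $K_{i-1}$; simplices added by fillings are critical; for an expansion $K_i=K_{i-1}\cup\{\sigma,\tau\}$, $\sigma\subset\tau$, $(\sigma,\tau)$ is a regular pair, $\sigma$ lower regular, $\tau$ upper regular. $\widehat W$ is the set of critical simplices. $K[p]$ is the $\mathbb{Z}_2$-vector space of subsets of $K^{(p)}$ (sum = symmetric difference, $0=\emptyset$; $K[p]=\{0\}$ if $p<0$ or $p>\dim K$), and $\widehat W[p]=\{c\in K[p]:c\subseteq\widehat W\}$. For $\sigma\in K^{(p)}$, $\partial(\sigma)=\{\tau\in K^{(p-1)}:\tau\subset\sigma\}$,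 $\delta(\sigma)=\{\tau\in K^{(p+1)}:\sigma\subset\tau\}$; $\partial_p:K[p]\to K[p-1]$ and $\delta_p:K[p]\to K[p+1]$ are their linear extensions. The reference map $\curlywedge$ is the unique map assigning to each $p$-simplex an element of $\widehat W[p]$, with linear extension $\curlywedge_p:K[p]\to\widehat W[p]$, such that $\curlywedge(\nu)=\{\nu\}$ for critical $\nu$ and $\curlywedge(\tau)=0=\curlywedge(\partial(\tau))$ for upper regular $\tau$; the coreference map $\curlyvee$ (linear extension $\curlyvee_p$) is the unique such map with $\curlyvee(\nu)=\{\nu\}$ for critical $\nu$ and $\curlyvee(\sigma)=0=\curlyvee(\delta(\sigma))$ for lower regular $\sigma$. The linear maps $\widehat\partial_p:\widehat W[p]\to\widehat W[p-1]$ and $\widehat\delta_p:\widehat W[p]\to\widehat W[p+1]$ are defined by $\widehat\partial_p(c)=\curlywedge_{p-1}(\partial_p(c))$ and $\widehat\delta_p(c)=\curlyvee_{p+1}(\delta_p(c))$. *)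

theory Defs
  imports Main
begin

(* Simplices are finite non-empty sets of vertices of type 'v; a complex is a set of simplices.
   dim sigma = card sigma - 1, so a p-simplex has card = p + 1. *)

definition simplicial_complex :: "'v set set \<Rightarrow> bool" where
  "simplicial_complex K \<longleftrightarrow> finite K \<and>
     (\<forall>\<sigma>\<in>K. finite \<sigma> \<and> \<sigma> \<noteq> {}) \<and>
     (\<forall>\<sigma>\<in>K. \<forall>\<tau>. \<tau> \<noteq> {} \<and> \<tau> \<subseteq> \<sigma> \<longrightarrow> \<tau> \<in> K)"

definition simplices :: "'v set set \<Rightarrow> int \<Rightarrow> 'v set set" where
  "simplices K p = {\<sigma>\<in>K. int (card \<sigma>) = p + 1}"

definition free_pair :: "'v set set \<Rightarrow> 'v set \<Rightarrow> 'v set \<Rightarrow> bool" where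
  "free_pair K \<sigma> \<tau> \<longleftrightarrow> \<sigma> \<in> K \<and> \<tau> \<in> K \<and> \<sigma> \<subset> \<tau> \<and>
     (\<forall>\<rho>\<in>K. \<sigma> \<subseteq> \<rho> \<longrightarrow> \<rho> = \<sigma> \<or> \<rho> = \<tau>)"

definition facet :: "'v set set \<Rightarrow> 'v set \<Rightarrow> bool" where
  "facet K \<nu> \<longleftrightarrow> \<nu> \<in> K \<and> \<not> (\<exists>\<rho>\<in>K. \<nu> \<subset> \<rho>)"

definition elem_expansion :: "'v set set \<Rightarrow> 'v set set \<Rightarrow> bool" where
  "elem_expansion K' K \<longleftrightarrow> simplicial_complex K' \<and>
     (\<exists>\<sigma> \<tau>. free_pair K' \<sigma> \<tau> \<and> K = K' - {\<sigma>, \<tau>})"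

definition elem_filling :: "'v set set \<Rightarrow> 'v set set \<Rightarrow> bool" where
  "elem_filling K' K \<longleftrightarrow> simplicial_complex K' \<and>
     (\<exists>\<nu>. facet K' \<nu> \<and> K = K' - {\<nu>})"

definition morse_seq :: "'v set set \<Rightarrow> 'v set set list \<Rightarrow> bool" where
  "morse_seq K Ks \<longleftrightarrow> Ks \<noteq> [] \<and> hd Ks = {} \<and> last Ks = K \<and>
     (\<forall>i. Suc i < length Ks \<longrightarrow>
        elem_expansion (Ks ! Suc i) (Ks ! i) \<or> elem_filling (Ks ! Suc i) (Ks ! i))"

definition critical :: "'v set set list \<Rightarrow> 'v set \<Rightarrow> bool" where
  "critical Ks \<nu> \<longleftrightarrow> (\<exists>i. Suc i < length Ks \<and>
     elem_filling (Ks ! Suc i) (Ks ! i) \<and> Ks ! Suc i - Ks ! i = {\<nu>})"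

definition regular_pair :: "'v set set list \<Rightarrow> 'v set \<Rightarrow> 'v set \<Rightarrow> bool" where
  "regular_pair Ks \<sigma> \<tau> \<longleftrightarrow> \<sigma> \<subset> \<tau> \<and> (\<exists>i. Suc i < length Ks \<and>
     elem_expansion (Ks ! Suc i) (Ks ! i) \<and> Ks ! Suc i - Ks ! i = {\<sigma>, \<tau>})"

definition lower_regular :: "'v set set list \<Rightarrow> 'v set \<Rightarrow> bool" where
  "lower_regular Ks \<sigma> \<longleftrightarrow> (\<exists>\<tau>. regular_pair Ks \<sigma> \<tau>)"

definition upper_regular :: "'v set set list \<Rightarrow> 'v set \<Rightarrow> bool" where
  "upper_regular Ks \<tau> \<longleftrightarrow> (\<exists>\<sigma>. regular_pair Ks \<sigma> \<tau>)"

(* Z2-linear extension of a map f from simplices to chains: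
   lin f c = symmetric-difference sum of f sigma over sigma in c *)
definition lin :: "('a \<Rightarrow> 'b set) \<Rightarrow> 'a set \<Rightarrow> 'b set" where
  "lin f c = {x. odd (card {\<sigma>\<in>c. x \<in> f \<sigma>})}"

definition bd :: "'v set set \<Rightarrow> 'v set \<Rightarrow> 'v set set" where
  "bd K \<sigma> = {\<tau>\<in>K. \<tau> \<subset> \<sigma> \<and> card \<tau> + 1 = card \<sigma>}"

definition cobd :: "'v set set \<Rightarrow> 'v set \<Rightarrow> 'v set set" where
  "cobd K \<sigma> = {\<tau>\<in>K. \<sigma> \<subset> \<tau> \<and> card \<tau> = card \<sigma> + 1}"

(* f maps each simplex of K to a chain of critical simplices of the same dimension
   (an element of What[p]); outside K it is 0 *)
definition crit_valued :: "'v set set \<Rightarrow> 'v set set list \<Rightarrow> ('v set \<Rightarrow> 'v set set) \<Rightarrow> bool" where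
  "crit_valued K Ks f \<longleftrightarrow> (\<forall>\<sigma>. \<sigma> \<notin> K \<longrightarrow> f \<sigma> = {}) \<and>
     (\<forall>\<sigma>\<in>K. f \<sigma> \<subseteq> {\<nu>\<in>K. critical Ks \<nu> \<and> card \<nu> = card \<sigma>})"

definition reference :: "'v set set \<Rightarrow> 'v set set list \<Rightarrow> 'v set \<Rightarrow> 'v set set" where
  "reference K Ks = (THE f. crit_valued K Ks f \<and>
     (\<forall>\<nu>\<in>K. critical Ks \<nu> \<longrightarrow> f \<nu> = {\<nu>}) \<and>
     (\<forall>\<tau>\<in>K. upper_regular Ks \<tau> \<longrightarrow> f \<tau> = {} \<and> lin f (bd K \<tau>) = {}))"

definition coreference :: "'v set set \<Rightarrow> 'v set set list \<Rightarrow> 'v set \<Rightarrow> 'v set set" where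
  "coreference K Ks = (THE f. crit_valued K Ks f \<and>
     (\<forall>\<nu>\<in>K. critical Ks \<nu> \<longrightarrow> f \<nu> = {\<nu>}) \<and>
     (\<forall>\<sigma>\<in>K. lower_regular Ks \<sigma> \<longrightarrow> f \<sigma> = {} \<and> lin f (cobd K \<sigma>) = {}))"

definition hat_bd :: "'v set set \<Rightarrow> 'v set set list \<Rightarrow> 'v set set \<Rightarrow> 'v set set" where
  "hat_bd K Ks c = lin (reference K Ks) (lin (bd K) c)"

definition hat_cobd :: "'v set set \<Rightarrow> 'v set set list \<Rightarrow> 'v set set \<Rightarrow> 'v set set" where
  "hat_cobd K Ks c = lin (coreference K Ks) (lin (cobd K) c)"

end

theory Submission
  imports Defs
begin

(* Both maps are instances of one construction. Let d be a mod-2 differential (lin d o d = 0)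
   on a finite set of cells, and let every non-critical cell be either lower or upper, each lower
   cell s being matched with an upper cell t such that s occurs in d t and all other cells of d t
   are smaller than s in a well-founded rank. The requirements f t = 0 = f (d t) for upper t
   force f s = f (d t - s), which defines f by well-founded recursion and shows that it is unique.
   The identity f o d o f = f o d is then proved cell by cell along the same recursion: it is
   immediate for critical and upper cells, and for a lower cell s it follows from the induction
   hypothesis applied to d t - s, whose image under d is d s because d (d t) = 0.
   In a Morse sequence the rank of a simplex is the step that adds it: the boundary with the
   regular pairs gives the reference map, and the coboundary with the pairs reversed and the
   steps counted backwards gives the coreference map. *)

lemma odd_card_sym_diff:
  assumes "finite A" "finite B"
  shows "odd (card (sym_diff A B)) \<longleftrightarrow> odd (card A) \<noteq> odd (card B)"
proof -
  have "card (sym_diff A B) = card (A - B) + card (B - A)"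
    using assms by (intro card_Un_disjoint) auto
  moreover have "card A = card (A \<inter> B) + card (A - B)" "card B = card (A \<inter> B) + card (B - A)"
    using assms card_Int_Diff[of A B] card_Int_Diff[of B A] by (auto simp: Int_commute)
  ultimately show ?thesis by presburger
qed

lemma lin_cong: "(\<And>s. s \<in> c \<Longrightarrow> f s = g s) \<Longrightarrow> lin f c = lin g c"
  unfolding lin_def by (metis (mono_tags, lifting) Collect_cong)

lemma lin_empty [simp]: "lin f {} = {}"
  by (simp add: lin_def)

lemma lin_singleton [simp]: "lin f {a} = f a"
  by (auto simp: lin_def Collect_conv_if)

lemma lin_subset_UN: "lin f c \<subseteq> (\<Union>s\<in>c. f s)"
  by (auto simp: lin_def dest: odd_card_imp_not_empty)

lemma finite_lin: "finite c \<Longrightarrow> (\<And>s. s \<in> c \<Longrightarrow> finite (f s)) \<Longrightarrow> finite (lin f c)"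
  by (meson finite_UN_I finite_subset lin_subset_UN)

lemma lin_sym_diff:
  assumes "finite A" "finite B"
  shows "lin f (sym_diff A B) = sym_diff (lin f A) (lin f B)"
proof -
  have "{s \<in> sym_diff A B. x \<in> f s} = sym_diff {s \<in> A. x \<in> f s} {s \<in> B. x \<in> f s}" for x
    by auto
  then have "x \<in> lin f (sym_diff A B) \<longleftrightarrow> (x \<in> lin f A) \<noteq> (x \<in> lin f B)" for x
    using odd_card_sym_diff[of "{s \<in> A. x \<in> f s}" "{s \<in> B. x \<in> f s}"] assms
    by (simp add: lin_def)
  then show ?thesis
    by blast
qed

lemma lin_insert:
  assumes "finite c" "a \<notin> c"
  shows "lin f (insert a c) = sym_diff (f a) (lin f c)"
proof -
  have "insert a c = sym_diff {a} c"
    using assms by auto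
  then show ?thesis
    using lin_sym_diff[of "{a}" c f] assms by simp
qed

lemma lin_lin:
  assumes "finite c" "\<And>s. s \<in> c \<Longrightarrow> finite (g s)"
  shows "lin f (lin g c) = lin (\<lambda>s. lin f (g s)) c"
  using assms
proof (induction c rule: finite_induct)
  case (insert a c)
  then have "finite (lin g c)"
    by (intro finite_lin) auto
  with insert show ?case
    by (simp add: lin_insert lin_sym_diff)
qed simp

locale morse_matching =
  fixes K :: "'a set" and d :: "'a \<Rightarrow> 'a set" and crit :: "'a \<Rightarrow> bool"
    and matched :: "'a \<Rightarrow> 'a \<Rightarrow> bool" and r g :: "'a \<Rightarrow> nat"
  assumes finite_K: "finite K"
    and d_subset: "s \<in> K \<Longrightarrow> d s \<subseteq> K"
    and d_d: "s \<in> K \<Longrightarrow> lin d (d s) = {}"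
    and crit_iff: "s \<in> K \<Longrightarrow> crit s \<longleftrightarrow> (\<nexists>t. matched s t) \<and> (\<nexists>t. matched t s)"
    and matched_face: "matched s t \<Longrightarrow> t \<in> K \<and> s \<in> d t"
    and matched_unique: "matched s t \<Longrightarrow> matched s t' \<Longrightarrow> t = t'"
    and matched_not_upper: "matched s t \<Longrightarrow> \<not> matched u s"
    and matched_descent: "matched s t \<Longrightarrow> \<rho> \<in> d t - {s} \<Longrightarrow> r \<rho> < r s \<and> g \<rho> = g s"
begin

abbreviation lower :: "'a \<Rightarrow> bool" where
  "lower s \<equiv> \<exists>t. matched s t"

abbreviation upper :: "'a \<Rightarrow> bool" where
  "upper t \<equiv> \<exists>s. matched s t"

definition partner :: "'a \<Rightarrow> 'a" where
  "partner s = (SOME t. matched s t)"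

lemma matched_partner: "lower s \<Longrightarrow> matched s (partner s)"
  unfolding partner_def by (rule someI_ex)

lemma partner_eq: "matched s t \<Longrightarrow> partner s = t"
  using matched_partner matched_unique by blast

lemma finite_d: "s \<in> K \<Longrightarrow> finite (d s)"
  using d_subset finite_K by (rule finite_subset)

lemma d_partner_split:
  assumes "lower s"
  shows "lin f (d (partner s)) = sym_diff (f s) (lin f (d (partner s) - {s}))"
proof -
  have "partner s \<in> K" "s \<in> d (partner s)"
    using matched_face[OF matched_partner[OF assms]] by auto
  moreover have "finite (d (partner s) - {s})"
    using finite_d \<open>partner s \<in> K\<close> by blast
  ultimately show ?thesis
    using lin_insert[of "d (partner s) - {s}" s f] by (simp add: insert_absorb)
qed

definition ref_map :: "'a \<Rightarrow> 'a set" where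
  "ref_map = wfrec (measure r) (\<lambda>R s. if s \<notin> K then {} else if crit s then {s}
     else if lower s then lin R (d (partner s) - {s}) else {})"

lemma ref_map_eq: "ref_map s = (if s \<notin> K then {} else if crit s then {s}
     else if lower s then lin ref_map (d (partner s) - {s}) else {})"
proof -
  have "ref_map s = (if s \<notin> K then {} else if crit s then {s}
     else if lower s then lin (cut ref_map (measure r) s) (d (partner s) - {s}) else {})"
    using def_wfrec[OF ref_map_def[THEN eq_reflection] wf_measure, of s] by simp
  moreover have "lin (cut ref_map (measure r) s) (d (partner s) - {s}) = lin ref_map (d (partner s) - {s})"
    if "lower s"
    using matched_descent[OF matched_partner[OF that]] by (intro lin_cong) (simp add: cut_apply)
  ultimately show ?thesis
    by auto
qed

lemma ref_map_notin: "s \<notin> K \<Longrightarrow> ref_map s = {}"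
  by (simp add: ref_map_eq)

lemma ref_map_crit: "s \<in> K \<Longrightarrow> crit s \<Longrightarrow> ref_map s = {s}"
  by (simp add: ref_map_eq)

lemma ref_map_lower: "s \<in> K \<Longrightarrow> lower s \<Longrightarrow> ref_map s = lin ref_map (d (partner s) - {s})"
  using crit_iff by (auto simp: ref_map_eq)

lemma ref_map_upper: "s \<in> K \<Longrightarrow> upper s \<Longrightarrow> ref_map s = {}"
  using crit_iff matched_not_upper by (auto simp: ref_map_eq)

lemma ref_map_d_upper:
  assumes "matched s t"
  shows "lin ref_map (d t) = {}"
proof -
  have "s \<in> K" "partner s = t"
    using matched_face[OF assms] d_subset partner_eq[OF assms] by auto
  then show ?thesis
    using d_partner_split[of s ref_map] ref_map_lower[of s] assms by auto
qed

lemma ref_map_subset: "ref_map s \<subseteq> {\<nu> \<in> K. crit \<nu> \<and> g \<nu> = g s}"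
proof (induction "r s" arbitrary: s rule: less_induct)
  case less
  show ?case
  proof (cases "s \<in> K \<and> \<not> crit s \<and> lower s")
    case True
    then have s_partner: "matched s (partner s)"
      using matched_partner by blast
    have "ref_map s \<subseteq> (\<Union>\<rho> \<in> d (partner s) - {s}. ref_map \<rho>)"
      using ref_map_lower True lin_subset_UN by metis
    also have "\<dots> \<subseteq> {\<nu> \<in> K. crit \<nu> \<and> g \<nu> = g s}"
    proof (rule UN_least)
      fix \<rho> assume "\<rho> \<in> d (partner s) - {s}"
      then show "ref_map \<rho> \<subseteq> {\<nu> \<in> K. crit \<nu> \<and> g \<nu> = g s}"
        using less matched_descent[OF s_partner] by metis
    qed
    finally show ?thesis .
  qed (auto simp: ref_map_eq)
qed

lemma finite_ref_map: "finite (ref_map s)"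
  using ref_map_subset finite_K by (blast intro: finite_subset)

definition is_reference :: "('a \<Rightarrow> 'a set) \<Rightarrow> bool" where
  "is_reference f \<longleftrightarrow> (\<forall>s. s \<notin> K \<longrightarrow> f s = {}) \<and>
     (\<forall>s\<in>K. f s \<subseteq> {\<nu> \<in> K. crit \<nu> \<and> g \<nu> = g s}) \<and>
     (\<forall>\<nu>\<in>K. crit \<nu> \<longrightarrow> f \<nu> = {\<nu>}) \<and> (\<forall>t\<in>K. upper t \<longrightarrow> f t = {} \<and> lin f (d t) = {})"

lemma is_reference_ref_map: "is_reference ref_map"
  unfolding is_reference_def
  using ref_map_notin ref_map_subset ref_map_crit ref_map_upper ref_map_d_upper by metis

lemma is_reference_unique:
  assumes "is_reference f"
  shows "f s = ref_map s"
proof (induction "r s" arbitrary: s rule: less_induct)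
  case less
  show ?case
  proof (cases "s \<in> K \<and> \<not> crit s \<and> lower s")
    case True
    then have "partner s \<in> K" "upper (partner s)"
      using matched_partner matched_face by blast+
    then have "lin f (d (partner s)) = {}"
      using assms unfolding is_reference_def by blast
    then have "f s = lin f (d (partner s) - {s})"
      using d_partner_split[of s f] True by blast
    also have "\<dots> = lin ref_map (d (partner s) - {s})"
      using less matched_descent[OF matched_partner] True by (intro lin_cong) blast
    finally show ?thesis
      using ref_map_lower True by simp
  next
    case False
    then consider "s \<notin> K" | "s \<in> K" "crit s" | "s \<in> K" "upper s"
      using crit_iff by blast
    then show ?thesis
      using assms ref_map_notin ref_map_crit ref_map_upper unfolding is_reference_def by metis
  qed
qed

lemma is_reference_iff: "is_reference f \<longleftrightarrow> f = ref_map"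
  using is_reference_unique is_reference_ref_map by blast

lemma ref_map_d_ref_map_chainI:
  assumes "c \<subseteq> K" and "\<And>\<rho>. \<rho> \<in> c \<Longrightarrow> lin ref_map (lin d (ref_map \<rho>)) = lin ref_map (d \<rho>)"
  shows "lin ref_map (lin d (lin ref_map c)) = lin ref_map (lin d c)"
proof -
  have "finite c"
    using assms(1) finite_K by (rule finite_subset)
  have finite_d_ref_map: "finite (lin d (ref_map \<rho>))" for \<rho>
    using ref_map_subset finite_d by (intro finite_lin finite_ref_map) blast
  have "lin ref_map (lin d (lin ref_map c)) = lin ref_map (lin (\<lambda>\<rho>. lin d (ref_map \<rho>)) c)"
    using \<open>finite c\<close> finite_ref_map by (subst lin_lin) auto
  also have "\<dots> = lin (\<lambda>\<rho>. lin ref_map (lin d (ref_map \<rho>))) c"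
    using \<open>finite c\<close> finite_d_ref_map by (rule lin_lin)
  also have "\<dots> = lin (\<lambda>\<rho>. lin ref_map (d \<rho>)) c"
    using assms(2) by (rule lin_cong)
  also have "\<dots> = lin ref_map (lin d c)"
    using \<open>finite c\<close> assms(1) finite_d by (subst lin_lin) auto
  finally show ?thesis .
qed

lemma ref_map_d_ref_map: "s \<in> K \<Longrightarrow> lin ref_map (lin d (ref_map s)) = lin ref_map (d s)"
proof (induction "r s" arbitrary: s rule: less_induct)
  case less
  consider "crit s" | "upper s" | "lower s"
    using crit_iff less.prems by blast
  then show ?case
  proof cases
    case 1
    then show ?thesis
      using ref_map_crit less.prems by simp
  next
    case 2
    then show ?thesis
      using ref_map_upper ref_map_d_upper less.prems by (metis lin_empty)
  next
    case 3
    define c where "c = d (partner s) - {s}"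
    have s_partner: "matched s (partner s)"
      using 3 by (rule matched_partner)
    then have "partner s \<in> K"
      using matched_face by blast
    then have "c \<subseteq> K"
      using c_def d_subset by blast
    have "lin d c = d s"
      using d_partner_split[OF 3, of d] d_d[OF \<open>partner s \<in> K\<close>] c_def by blast
    moreover have "lin ref_map (lin d (lin ref_map c)) = lin ref_map (lin d c)"
    proof (rule ref_map_d_ref_map_chainI)
      fix \<rho> assume "\<rho> \<in> c"
      then show "lin ref_map (lin d (ref_map \<rho>)) = lin ref_map (d \<rho>)"
        using less matched_descent[OF s_partner] \<open>c \<subseteq> K\<close> c_def by blast
    qed (rule \<open>c \<subseteq> K\<close>)
    ultimately show ?thesis
      using ref_map_lower less.prems 3 c_def by simp
  qed
qed

lemma ref_map_d_ref_map_chain: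
  "c \<subseteq> K \<Longrightarrow> lin ref_map (lin d (lin ref_map c)) = lin ref_map (lin d c)"
  using ref_map_d_ref_map ref_map_d_ref_map_chainI by (meson subsetD)

end

lemma simplicial_complex_finite: "simplicial_complex K \<Longrightarrow> s \<in> K \<Longrightarrow> finite s"
  unfolding simplicial_complex_def by blast

lemma simplicial_complex_nonempty: "simplicial_complex K \<Longrightarrow> s \<in> K \<Longrightarrow> s \<noteq> {}"
  unfolding simplicial_complex_def by blast

lemma simplicial_complex_face:
  "simplicial_complex K \<Longrightarrow> t \<in> K \<Longrightarrow> s \<subseteq> t \<Longrightarrow> s \<noteq> {} \<Longrightarrow> s \<in> K"
  unfolding simplicial_complex_def by blast

lemma card_sets_between_codim2:
  assumes "finite B" "A \<subseteq> B" "card B = card A + 2"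
  shows "card {\<rho>. A \<subseteq> \<rho> \<and> \<rho> \<subseteq> B \<and> card \<rho> = card A + 1} = 2"
proof -
  have "finite A"
    using assms finite_subset by blast
  then have "card (B - A) = 2"
    using assms by (simp add: card_Diff_subset)
  then obtain a b where ab: "a \<noteq> b" "B - A = {a, b}"
    by (meson card_2_iff)
  have "{\<rho>. A \<subseteq> \<rho> \<and> \<rho> \<subseteq> B \<and> card \<rho> = card A + 1} = {insert a A, insert b A}"
  proof (intro equalityI subsetI)
    fix \<rho> assume "\<rho> \<in> {\<rho>. A \<subseteq> \<rho> \<and> \<rho> \<subseteq> B \<and> card \<rho> = card A + 1}"
    then have \<rho>: "A \<subseteq> \<rho>" "\<rho> \<subseteq> B" "card \<rho> = card A + 1"
      by auto
    then have "card (\<rho> - A) = 1"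
      using \<open>finite A\<close> by (simp add: card_Diff_subset)
    then obtain c where c: "\<rho> - A = {c}"
      by (meson card_1_singletonE)
    then have "\<rho> = insert c A" "c \<in> {a, b}"
      using ab \<rho> by blast+
    then show "\<rho> \<in> {insert a A, insert b A}"
      by blast
  next
    fix \<rho> assume "\<rho> \<in> {insert a A, insert b A}"
    moreover have "a \<notin> A" "b \<notin> A" "a \<in> B" "b \<in> B"
      using ab by auto
    ultimately show "\<rho> \<in> {\<rho>. A \<subseteq> \<rho> \<and> \<rho> \<subseteq> B \<and> card \<rho> = card A + 1}"
      using \<open>finite A\<close> assms(2) by auto
  qed
  moreover have "insert a A \<noteq> insert b A"
    using ab by blast
  ultimately show ?thesis
    by simp
qed

lemma even_card_faces_between:
  assumes "simplicial_complex K" "y \<in> K"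
  shows "even (card {\<rho> \<in> K. x \<subseteq> \<rho> \<and> \<rho> \<subseteq> y \<and>
    card \<rho> = card x + 1 \<and> card y = card \<rho> + 1})"
proof (cases "x \<subseteq> y \<and> card y = card x + 2")
  case True
  have "{\<rho> \<in> K. x \<subseteq> \<rho> \<and> \<rho> \<subseteq> y \<and> card \<rho> = card x + 1 \<and> card y = card \<rho> + 1}
      = {\<rho>. x \<subseteq> \<rho> \<and> \<rho> \<subseteq> y \<and> card \<rho> = card x + 1}"
  proof (intro equalityI subsetI)
    fix \<rho> assume \<rho>: "\<rho> \<in> {\<rho>. x \<subseteq> \<rho> \<and> \<rho> \<subseteq> y \<and> card \<rho> = card x + 1}"
    then have "\<rho> \<noteq> {}"
      by auto
    then have "\<rho> \<in> K"
      using \<rho> simplicial_complex_face[OF assms] by blast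
    then show "\<rho> \<in> {\<rho> \<in> K. x \<subseteq> \<rho> \<and> \<rho> \<subseteq> y \<and> card \<rho> = card x + 1 \<and> card y = card \<rho> + 1}"
      using \<rho> True by simp
  qed auto
  moreover have "card {\<rho>. x \<subseteq> \<rho> \<and> \<rho> \<subseteq> y \<and> card \<rho> = card x + 1} = 2"
    using simplicial_complex_finite[OF assms] True by (intro card_sets_between_codim2) auto
  ultimately show ?thesis
    by simp
next
  case False
  then have "{\<rho> \<in> K. x \<subseteq> \<rho> \<and> \<rho> \<subseteq> y \<and> card \<rho> = card x + 1 \<and> card y = card \<rho> + 1} = {}"
    by auto
  then show ?thesis
    by (metis card.empty even_zero)
qed

lemma bd_bd:
  assumes "simplicial_complex K" "s \<in> K"
  shows "lin (bd K) (bd K s) = {}"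
proof -
  have "{\<rho> \<in> bd K s. x \<in> bd K \<rho>} = (if x \<in> K then
      {\<rho> \<in> K. x \<subseteq> \<rho> \<and> \<rho> \<subseteq> s \<and> card \<rho> = card x + 1 \<and> card s = card \<rho> + 1} else {})" for x
    by (auto simp: bd_def)
  then show ?thesis
    using even_card_faces_between[OF assms] by (simp add: lin_def)
qed

lemma cobd_cobd:
  assumes "simplicial_complex K"
  shows "lin (cobd K) (cobd K s) = {}"
proof -
  have "{\<rho> \<in> cobd K s. x \<in> cobd K \<rho>} = (if x \<in> K then
      {\<rho> \<in> K. s \<subseteq> \<rho> \<and> \<rho> \<subseteq> x \<and> card \<rho> = card s + 1 \<and> card x = card \<rho> + 1} else {})" for x
    by (auto simp: cobd_def)
  then show ?thesis
    using even_card_faces_between[OF assms] by (simp add: lin_def)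
qed

lemma free_pair_card:
  assumes "simplicial_complex C" "free_pair C s t"
  shows "card t = card s + 1"
proof -
  have st: "s \<in> C" "t \<in> C" "s \<subset> t" "\<forall>\<rho>\<in>C. s \<subseteq> \<rho> \<longrightarrow> \<rho> = s \<or> \<rho> = t"
    using assms(2) unfolding free_pair_def by auto
  obtain x where x: "x \<in> t" "x \<notin> s"
    using st(3) by blast
  have "insert x s \<subseteq> t"
    using x(1) st(3) by blast
  then have "insert x s \<in> C"
    using simplicial_complex_face[OF assms(1) st(2)] by blast
  then have "insert x s = t"
    using st(4) x(2) by blast
  moreover have "finite s"
    using simplicial_complex_finite[OF assms(1) st(1)] .
  ultimately show ?thesis
    using x(2) by force
qed

lemma psubset_doubleton_eq:
  "{a, b} = {s, t} \<Longrightarrow> a \<subset> b \<Longrightarrow> s \<subset> t \<Longrightarrow> a = s \<and> b = t"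
  by (metis doubleton_eq_iff order.asym)

locale morse_sequence =
  fixes K :: "'v set set" and Ks :: "'v set set list"
  assumes complex: "simplicial_complex K" and morse: "morse_seq K Ks"
begin

lemma morse_step:
  "Suc i < length Ks \<Longrightarrow> elem_expansion (Ks ! Suc i) (Ks ! i) \<or> elem_filling (Ks ! Suc i) (Ks ! i)"
  using morse by (simp add: morse_seq_def)

lemma nth_mono: "i \<le> j \<Longrightarrow> j < length Ks \<Longrightarrow> Ks ! i \<subseteq> Ks ! j"
proof (induction j rule: dec_induct)
  case (step j)
  then have "Ks ! j \<subseteq> Ks ! Suc j"
    using morse_step[of j] by (auto simp: elem_expansion_def elem_filling_def)
  with step show ?case
    by auto
qed simp

lemma nth_0: "Ks ! 0 = {}"
  using morse hd_conv_nth[of Ks] by (simp add: morse_seq_def)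

lemma nth_last: "Ks ! (length Ks - 1) = K"
  using morse last_conv_nth[of Ks] by (simp add: morse_seq_def)

lemma nth_subset: "i < length Ks \<Longrightarrow> Ks ! i \<subseteq> K"
  using nth_mono[of i "length Ks - 1"] nth_last by simp

definition adding_step :: "'v set \<Rightarrow> nat" where
  "adding_step s = (LEAST i. s \<in> Ks ! Suc i)"

lemma nth_Suc_adding_step:
  assumes "s \<in> K"
  shows "Suc (adding_step s) < length Ks" "s \<in> Ks ! Suc (adding_step s)"
proof -
  have "length Ks \<noteq> 1"
    using assms nth_0 nth_last by auto
  moreover have "Ks \<noteq> []"
    using morse by (simp add: morse_seq_def)
  ultimately have "Suc (length Ks - 2) = length Ks - 1" "length Ks - 1 < length Ks"
    by (cases Ks; simp)+
  then have "Suc (length Ks - 2) < length Ks" "s \<in> Ks ! Suc (length Ks - 2)"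
    using assms nth_last by simp_all
  then show "Suc (adding_step s) < length Ks" "s \<in> Ks ! Suc (adding_step s)"
    unfolding adding_step_def by (auto intro: LeastI Least_le le_less_trans)
qed

lemma mem_nth_iff:
  assumes "s \<in> K" "j < length Ks"
  shows "s \<in> Ks ! j \<longleftrightarrow> adding_step s < j"
proof
  assume "s \<in> Ks ! j"
  then obtain i where "j = Suc i" "s \<in> Ks ! Suc i"
    using nth_0 by (cases j) auto
  then show "adding_step s < j"
    unfolding adding_step_def by (simp add: Least_le le_imp_less_Suc)
next
  assume "adding_step s < j"
  then show "s \<in> Ks ! j"
    using nth_Suc_adding_step[OF assms(1)] nth_mono[of "Suc (adding_step s)" j] assms(2) by auto
qed

lemma adding_step_eq:
  assumes "Suc i < length Ks" "s \<in> Ks ! Suc i - Ks ! i"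
  shows "adding_step s = i"
proof -
  have "s \<in> K"
    using assms nth_subset by blast
  then show ?thesis
    using assms mem_nth_iff[of s i] mem_nth_iff[of s "Suc i"] by auto
qed

lemma critical_step:
  assumes "critical Ks \<nu>"
  shows "Ks ! Suc (adding_step \<nu>) - Ks ! adding_step \<nu> = {\<nu>}"
proof -
  obtain i where "Suc i < length Ks" "Ks ! Suc i - Ks ! i = {\<nu>}"
    using assms unfolding critical_def by blast
  moreover from this have "adding_step \<nu> = i"
    by (intro adding_step_eq) auto
  ultimately show ?thesis
    by simp
qed

lemma regular_pairE:
  assumes "regular_pair Ks s t"
  obtains i where "adding_step s = i" "adding_step t = i" "Suc i < length Ks"
    "simplicial_complex (Ks ! Suc i)" "free_pair (Ks ! Suc i) s t" "Ks ! Suc i - Ks ! i = {s, t}"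
proof -
  obtain i where i: "s \<subset> t" "Suc i < length Ks" "elem_expansion (Ks ! Suc i) (Ks ! i)"
      "Ks ! Suc i - Ks ! i = {s, t}"
    using assms unfolding regular_pair_def by blast
  obtain a b where ab: "simplicial_complex (Ks ! Suc i)" "free_pair (Ks ! Suc i) a b"
      "Ks ! i = Ks ! Suc i - {a, b}"
    using i(3) unfolding elem_expansion_def by blast
  have "a \<in> Ks ! Suc i" "b \<in> Ks ! Suc i" "a \<subset> b"
    using ab(2) unfolding free_pair_def by auto
  then have "Ks ! Suc i - Ks ! i = {a, b}"
    unfolding ab(3) by auto
  then have "{a, b} = {s, t}"
    using i(4) by simp
  then have "a = s \<and> b = t"
    using \<open>a \<subset> b\<close> i(1) by (rule psubset_doubleton_eq)
  moreover have "adding_step s = i" "adding_step t = i"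
    using adding_step_eq i(2,4) by auto
  ultimately show ?thesis
    using that[of i] i(2,4) ab(1,2) by simp
qed

lemma regular_pair_unique:
  assumes "regular_pair Ks s t" "regular_pair Ks s' t'" "adding_step s = adding_step s'"
  shows "s = s' \<and> t = t'"
proof -
  obtain i where "adding_step s = i" "Ks ! Suc i - Ks ! i = {s, t}"
    using assms(1) by (rule regular_pairE)
  moreover obtain i' where "adding_step s' = i'" "Ks ! Suc i' - Ks ! i' = {s', t'}"
    using assms(2) by (rule regular_pairE)
  moreover have "s \<subset> t" "s' \<subset> t'"
    using assms(1,2) unfolding regular_pair_def by blast+
  ultimately show ?thesis
    using assms(3) psubset_doubleton_eq by metis
qed

lemma regular_pair_not_critical:
  assumes "regular_pair Ks s t"
  shows "\<not> critical Ks s" "\<not> critical Ks t"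
proof -
  obtain i where i: "adding_step s = i" "adding_step t = i" "Ks ! Suc i - Ks ! i = {s, t}"
    using assms by (rule regular_pairE)
  have "s \<noteq> t"
    using assms unfolding regular_pair_def by blast
  then show "\<not> critical Ks s" "\<not> critical Ks t"
    using critical_step i by (metis doubleton_eq_iff insert_absorb2)+
qed

lemma lower_not_upper_regular:
  assumes "regular_pair Ks s t"
  shows "\<not> regular_pair Ks u s"
proof
  assume us: "regular_pair Ks u s"
  then have "adding_step u = adding_step s"
    by (rule regular_pairE) simp
  then have "u = s"
    using regular_pair_unique[OF us assms] by blast
  with us show False
    unfolding regular_pair_def by blast
qed

lemma critical_or_regular:
  assumes "s \<in> K"
  shows "critical Ks s \<or> lower_regular Ks s \<or> upper_regular Ks s"
proof -
  define i where "i = adding_step s"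
  have i: "Suc i < length Ks" "s \<in> Ks ! Suc i - Ks ! i"
    using nth_Suc_adding_step[OF assms] mem_nth_iff[OF assms] unfolding i_def by auto
  consider "elem_filling (Ks ! Suc i) (Ks ! i)" | "elem_expansion (Ks ! Suc i) (Ks ! i)"
    using morse_step i(1) by blast
  then show ?thesis
  proof cases
    case 1
    then obtain \<nu> where "facet (Ks ! Suc i) \<nu>" "Ks ! i = Ks ! Suc i - {\<nu>}"
      unfolding elem_filling_def by blast
    then have "Ks ! Suc i - Ks ! i = {s}"
      using i(2) unfolding facet_def by blast
    then have "critical Ks s"
      using 1 i(1) unfolding critical_def by blast
    then show ?thesis ..
  next
    case 2
    then obtain a b where ab: "free_pair (Ks ! Suc i) a b" "Ks ! i = Ks ! Suc i - {a, b}"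
      unfolding elem_expansion_def by blast
    then have "a \<subset> b" "Ks ! Suc i - Ks ! i = {a, b}"
      unfolding free_pair_def by auto
    then have "regular_pair Ks a b"
      using 2 i(1) unfolding regular_pair_def by blast
    moreover have "s = a \<or> s = b"
      using i(2) \<open>Ks ! Suc i - Ks ! i = {a, b}\<close> by blast
    ultimately show ?thesis
      unfolding lower_regular_def upper_regular_def by blast
  qed
qed

lemma critical_iff:
  "s \<in> K \<Longrightarrow> critical Ks s \<longleftrightarrow> \<not> lower_regular Ks s \<and> \<not> upper_regular Ks s"
  using critical_or_regular regular_pair_not_critical
  unfolding lower_regular_def upper_regular_def by blast

lemma regular_pair_faces:
  assumes "regular_pair Ks s t"
  shows "s \<in> bd K t" "t \<in> cobd K s"
proof -
  obtain i where i: "Suc i < length Ks" "simplicial_complex (Ks ! Suc i)"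
      "free_pair (Ks ! Suc i) s t"
    using assms by (rule regular_pairE)
  then have "s \<in> K" "t \<in> K" "s \<subset> t"
    using nth_subset[of "Suc i"] unfolding free_pair_def by auto
  moreover have "card t = card s + 1"
    using free_pair_card i(2,3) .
  ultimately show "s \<in> bd K t" "t \<in> cobd K s"
    unfolding bd_def cobd_def by auto
qed

lemma regular_pair_bd_descent:
  assumes "regular_pair Ks s t" "\<rho> \<in> bd K t - {s}"
  shows "adding_step \<rho> < adding_step s \<and> card \<rho> = card s"
proof -
  obtain i where i: "adding_step s = i" "Suc i < length Ks" "simplicial_complex (Ks ! Suc i)"
      "free_pair (Ks ! Suc i) s t" "Ks ! Suc i - Ks ! i = {s, t}"
    using assms(1) by (rule regular_pairE)
  have \<rho>: "\<rho> \<in> K" "\<rho> \<subset> t" "card \<rho> + 1 = card t" "\<rho> \<noteq> s"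
    using assms(2) unfolding bd_def by auto
  have "t \<in> Ks ! Suc i"
    using i(4) unfolding free_pair_def by blast
  then have "\<rho> \<in> Ks ! Suc i"
    using simplicial_complex_face[OF i(3)] simplicial_complex_nonempty[OF complex \<rho>(1)] \<rho>(2)
    by blast
  then have "\<rho> \<in> Ks ! i"
    using i(5) \<rho>(2,4) by blast
  then have "adding_step \<rho> < i"
    using mem_nth_iff[OF \<rho>(1)] i(2) by simp
  moreover have "card t = card s + 1"
    using free_pair_card i(3,4) .
  ultimately show ?thesis
    using i(1) \<rho>(3) by simp
qed

lemma regular_pair_cobd_ascent:
  assumes "regular_pair Ks s t" "\<rho> \<in> cobd K s - {t}"
  shows "adding_step t < adding_step \<rho> \<and> adding_step \<rho> < length Ks \<and> card \<rho> = card t"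
proof -
  obtain i where i: "adding_step t = i" "Suc i < length Ks" "simplicial_complex (Ks ! Suc i)"
      "free_pair (Ks ! Suc i) s t"
    using assms(1) by (rule regular_pairE)
  have \<rho>: "\<rho> \<in> K" "s \<subset> \<rho>" "card \<rho> = card s + 1" "\<rho> \<noteq> t"
    using assms(2) unfolding cobd_def by auto
  then have "\<rho> \<notin> Ks ! Suc i"
    using i(4) unfolding free_pair_def by blast
  then have "i < adding_step \<rho>"
    using mem_nth_iff[OF \<rho>(1) i(2)] by simp
  moreover have "card t = card s + 1"
    using free_pair_card i(3,4) .
  ultimately show ?thesis
    using i(1) \<rho>(3) nth_Suc_adding_step[OF \<rho>(1)] by simp
qed

sublocale bd_match: morse_matching K "bd K" "critical Ks" "regular_pair Ks" adding_step card
proof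
  show "finite K"
    using complex by (simp add: simplicial_complex_def)
  show "\<And>s. bd K s \<subseteq> K" "\<And>s. s \<in> K \<Longrightarrow> lin (bd K) (bd K s) = {}"
    using bd_bd complex by (auto simp: bd_def)
  show "\<And>s. s \<in> K \<Longrightarrow>
      critical Ks s \<longleftrightarrow> (\<nexists>t. regular_pair Ks s t) \<and> (\<nexists>t. regular_pair Ks t s)"
    using critical_iff unfolding lower_regular_def upper_regular_def by blast
  show "\<And>s t. regular_pair Ks s t \<Longrightarrow> t \<in> K \<and> s \<in> bd K t"
    using regular_pair_faces unfolding cobd_def by blast
  show "\<And>s t t'. regular_pair Ks s t \<Longrightarrow> regular_pair Ks s t' \<Longrightarrow> t = t'"
    using regular_pair_unique by blast
  show "\<And>s t u. regular_pair Ks s t \<Longrightarrow> \<not> regular_pair Ks u s"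
    by (rule lower_not_upper_regular)
  show "\<And>s t \<rho>. regular_pair Ks s t \<Longrightarrow> \<rho> \<in> bd K t - {s} \<Longrightarrow>
      adding_step \<rho> < adding_step s \<and> card \<rho> = card s"
    by (rule regular_pair_bd_descent)
qed

sublocale cobd_match: morse_matching K "cobd K" "critical Ks" "\<lambda>t s. regular_pair Ks s t"
  "\<lambda>s. length Ks - adding_step s" card
proof
  show "finite K"
    using complex by (simp add: simplicial_complex_def)
  show "\<And>s. cobd K s \<subseteq> K" "\<And>s. s \<in> K \<Longrightarrow> lin (cobd K) (cobd K s) = {}"
    using cobd_cobd complex by (auto simp: cobd_def)
  show "\<And>s. s \<in> K \<Longrightarrow>
      critical Ks s \<longleftrightarrow> (\<nexists>t. regular_pair Ks t s) \<and> (\<nexists>t. regular_pair Ks s t)"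
    using critical_iff unfolding lower_regular_def upper_regular_def by blast
  show "\<And>t s. regular_pair Ks s t \<Longrightarrow> s \<in> K \<and> t \<in> cobd K s"
    using regular_pair_faces unfolding bd_def by blast
  show "\<And>t s s'. regular_pair Ks s t \<Longrightarrow> regular_pair Ks s' t \<Longrightarrow> s = s'"
    using regular_pair_unique regular_pairE by metis
  show "\<And>t s u. regular_pair Ks s t \<Longrightarrow> \<not> regular_pair Ks t u"
    using lower_not_upper_regular by blast
  show "\<And>t s \<rho>. regular_pair Ks s t \<Longrightarrow> \<rho> \<in> cobd K s - {t} \<Longrightarrow>
      length Ks - adding_step \<rho> < length Ks - adding_step t \<and> card \<rho> = card t"
    using regular_pair_cobd_ascent by fastforce
qed

lemma reference_eq: "reference K Ks = bd_match.ref_map"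
proof -
  have "reference K Ks = (THE f. bd_match.is_reference f)"
    unfolding reference_def bd_match.is_reference_def crit_valued_def upper_regular_def
      conj_assoc ..
  then show ?thesis
    by (simp add: bd_match.is_reference_iff)
qed

lemma coreference_eq: "coreference K Ks = cobd_match.ref_map"
proof -
  have "coreference K Ks = (THE f. cobd_match.is_reference f)"
    unfolding coreference_def cobd_match.is_reference_def crit_valued_def lower_regular_def
      conj_assoc ..
  then show ?thesis
    by (simp add: cobd_match.is_reference_iff)
qed

end

theorem theorem4:
  fixes K :: "'v set set" and Ks :: "'v set set list"
  assumes "simplicial_complex K" and "morse_seq K Ks"
  shows "\<forall>(p::int) c. c \<subseteq> simplices K p \<longrightarrow>
           hat_bd K Ks (lin (reference K Ks) c) = lin (reference K Ks) (lin (bd K) c)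
         \<and> hat_cobd K Ks (lin (coreference K Ks) c) = lin (coreference K Ks) (lin (cobd K) c)"
proof (intro allI impI)
  fix p :: int and c
  assume "c \<subseteq> simplices K p"
  then have "c \<subseteq> K"
    by (auto simp: simplices_def)
  interpret morse_sequence K Ks
    using assms by unfold_locales
  show "hat_bd K Ks (lin (reference K Ks) c) = lin (reference K Ks) (lin (bd K) c)
      \<and> hat_cobd K Ks (lin (coreference K Ks) c) = lin (coreference K Ks) (lin (cobd K) c)"
    unfolding hat_bd_def hat_cobd_def reference_eq coreference_eq
    using bd_match.ref_map_d_ref_map_chain[OF \<open>c \<subseteq> K\<close>]
      cobd_match.ref_map_d_ref_map_chain[OF \<open>c \<subseteq> K\<close>] ..
qed

end
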